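(* Let $\Omega\subset\mathbb{R}^d$ be bounded, and let $u$ be the exact solution of the transport equation $\partial_t u+a\cdot\nabla u=0$ on $\Omega$, so that $u(t^{m},x)=u(t^{m-1},\mathcal{X}^{m}(x))$ for all $m\ge1$, $x\in\Omega$, where $\mathcal{X}^m(x)=\mathcal{X}(t^{m-1};t^m,x)$. Assume each $\mathcal{X}^m$ is a $C^1$ diffeomorphism of $\Omega$ onto itself with $d_{\mathcal{X}}^m>0$. Let $u_{\theta^m}$ ($m\ge0$) be the computed approximations and $u_{\theta^m_\ast}$ the exact minimizers, as defined in the context; assume each $u_{\theta^m}$ is $C^2$ on $\mathbb{R}^d$ with bounded Hessian, $\sup_{\mathbb{R}^d}|D^2u_{\theta^m}|\le H$. Let the approximate characteristic map $\widetilde{\mathcal{X}}^m(x)=\widetilde{\mathcal{X}}(t^{m-1};t^m,x)$ be produced by a solver of order $p$ using $n_\tau$ sub-time steps, and set $h=\Delta t/n_\tau\in(0,1]$. Assume there are constants $M_p\ge0$, $K_R\ge0$ such that for all $m\ge1$ and $x\in\Omega$, $$\Bigl|\widetilde{\mathcal{X}}^m(x)-\mathcal{X}^m(x)-M_p\,(\mathcal{X}^m)^{(p+1)}(x)\,h^{p+1}\Bigr|\le K_R\,h^{2p+2},$$ where $(\mathcal{X}^m)^{(p+1)}(x)$ is the $(p+1)$-th derivative of $s\mapsto\mathcal{X}(s;t^m,x)$ evaluated at $s=t^{m-1}$, and assume $\|(\mathcal{X}^m)^{(p+1)}\|_{L^\infty(\Omega)}\le B$. Then for every $n\ge0$, $$\|u_{\theta^n}-u(t^n,\cdot)\|_{L^2(\Omega)}\le\sum_{\mathfrak{n}=0}^{n}\bigl(\varepsilon_{\rm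 int}^{\mathfrak{n}}+\varepsilon_{\rm opt}^{\mathfrak{n}}+\varepsilon_{\rm approx}^{\mathfrak{n}}\bigr)\mathcal{D}^{\mathfrak{n}}+\Bigl(\sum_{\mathfrak{n}=1}^{n}\mathcal{C}^{\mathfrak{n}}\mathcal{D}^{\mathfrak{n}}\Bigr)h^{p+1}+K\,h^{2p+2},$$ where $\mathcal{C}^{\mathfrak{n}}=\frac{M_p}{d_{\mathcal{X}}^{\mathfrak{n}}}\|(\mathcal{X}^{\mathfrak{n}})^{(p+1)}\|_{L^\infty(\Omega)}\|\nabla u_{\theta^{\mathfrak{n}-1}}\|_{L^2(\Omega)}$, $\mathcal{D}^{\mathfrak{n}}=\prod_{m=\mathfrak{n}+1}^{n}\frac{1}{d_{\mathcal{X}}^m}$ (empty product $=1$), and $K$ is a constant independent of $h\in(0,1]$, depending only on $n$, $|\Omega|$, $H$, $M_p$, $K_R$, $B$, the numbers $d_{\mathcal{X}}^m$ and the norms $\|\nabla u_{\theta^m}\|_{L^2(\Omega)}$, $m\le n$.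
   Context: Backward characteristics: $s\mapsto\mathcal{X}(s;t,x)$ solves $\frac{d}{ds}\mathcal{X}=a(s,\mathcal{X})$, $\mathcal{X}(t;t,x)=x$. Time grid $t^{m}=t^{m-1}+\Delta t$. For a map $\mathcal{X}^m$, $d_{\mathcal{X}}^m=\sqrt{\inf_{y\in\Omega}|\det D\mathcal{X}^m(y)|}$. Fix collocation points $x_1,\dots,x_{N_c}\in\Omega$. $\mathcal{V}$ is a fixed set of functions (e.g. neural networks $x\mapsto\mathcal{N}(x,\vartheta)$). $u_{\theta^0_\ast}$ minimizes $\frac1{N_c}\sum_k|v(x_k)-u_0(x_k)|^2$ over $v\in\mathcal{V}$ (with $u_0=u(0,\cdot)$) and for $m\ge1$, $u_{\theta^m_\ast}$ minimizes $\frac1{N_c}\sum_k|v(x_k)-u_{\theta^{m-1}}(\widetilde{\mathcal{X}}^m(x_k))|^2$ over $v\in\mathcal{V}$; $u_{\theta^m}\in\mathcal{V}$ is any (approximate) computed solution of the same problem. Error terms: integration error $\varepsilon_{\rm int}(f;(x_k))=\bigl|\|f\|_{L^2(\Omega)}-\frac1{N_c}\sum_k|f(x_k)|^2\bigr|$; optimization error $\varepsilon_{\rm opt}(f,g;(x_k))=\frac1{N_c}\sum_k|f(x_k)-g(x_k)|^2$; approximation error $\varepsilon_{\rm approx}(f,g)=\|f-g\|_{L^2(\Omega)}$. Set $\varepsilon_{\rm int}^{\mathfrak n}=\varepsilon_{\rm int}(u_{\theta^{\mathfrak n}}-u_{\theta^{\mathfrak n}_\ast};(x_k))$, $\varepsilon_{\rm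 opt}^{\mathfrak n}=\varepsilon_{\rm opt}(u_{\theta^{\mathfrak n}},u_{\theta^{\mathfrak n}_\ast};(x_k))$, $\varepsilon_{\rm approx}^{\mathfrak n}=\varepsilon_{\rm approx}(u_{\theta^{\mathfrak n}_\ast},u_{\theta^{\mathfrak n-1}}\circ\widetilde{\mathcal{X}}^{\mathfrak n})$ if $\mathfrak n>0$ and $\varepsilon_{\rm approx}^{0}=\varepsilon_{\rm approx}(u_{\theta^0_\ast},u_0)$. *)

theory Defs
  imports "HOL-Analysis.Analysis"
begin

definition L2norm :: "(real^'d) set \<Rightarrow> (real^'d \<Rightarrow> 'b::real_normed_vector) \<Rightarrow> real" where
  "L2norm \<Omega> f = sqrt (integral\<^sup>L (lebesgue_on \<Omega>) (\<lambda>x. (norm (f x))^2))"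

definition supnorm_on :: "(real^'d) set \<Rightarrow> (real^'d \<Rightarrow> 'b::real_normed_vector) \<Rightarrow> real" where
  "supnorm_on \<Omega> g = (SUP x\<in>\<Omega>. norm (g x))"

definition grad :: "(real^'d \<Rightarrow> real) \<Rightarrow> real^'d \<Rightarrow> real^'d" where
  "grad f x = (\<chi> i. frechet_derivative f (at x) (axis i 1))"

definition hess :: "(real^'d \<Rightarrow> real) \<Rightarrow> real^'d \<Rightarrow> real^'d \<Rightarrow> real^'d" where
  "hess f x = frechet_derivative (grad f) (at x)"

definition C1_on :: "(real^'d) set \<Rightarrow> (real^'d \<Rightarrow> real^'e) \<Rightarrow> bool" where
  "C1_on S f \<longleftrightarrow> (\<forall>y\<in>S. f differentiable (at y)) \<and> continuous_on S (\<lambda>y. jacobian f (at y))"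

definition C2_everywhere :: "(real^'d \<Rightarrow> real) \<Rightarrow> bool" where
  "C2_everywhere f \<longleftrightarrow> (\<forall>x. f differentiable (at x)) \<and> C1_on UNIV (grad f)"

definition C1_diffeo_onto :: "(real^'d) set \<Rightarrow> (real^'d \<Rightarrow> real^'d) \<Rightarrow> bool" where
  "C1_diffeo_onto S F \<longleftrightarrow> F ` S = S \<and> C1_on S F \<and>
     (\<exists>G. G ` S = S \<and> C1_on S G \<and> (\<forall>y\<in>S. G (F y) = y) \<and> (\<forall>y\<in>S. F (G y) = y))"

definition dX :: "(real^'d) set \<Rightarrow> (real^'d \<Rightarrow> real^'d) \<Rightarrow> real" where
  "dX \<Omega> F = sqrt (INF y\<in>\<Omega>. \<bar>det (jacobian F (at y))\<bar>)"

definition hderiv :: "nat \<Rightarrow> (real \<Rightarrow> 'b::real_normed_vector) \<Rightarrow> real \<Rightarrow> 'b" where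
  "hderiv k f = ((\<lambda>g s. vector_derivative g (at s)) ^^ k) f"

definition eps_int :: "(real^'d) set \<Rightarrow> (nat \<Rightarrow> real^'d) \<Rightarrow> nat \<Rightarrow> (real^'d \<Rightarrow> real) \<Rightarrow> real" where
  "eps_int \<Omega> xs Nc f = \<bar>L2norm \<Omega> f - (\<Sum>k<Nc. \<bar>f (xs k)\<bar>^2) / real Nc\<bar>"

definition eps_opt :: "(nat \<Rightarrow> real^'d) \<Rightarrow> nat \<Rightarrow> (real^'d \<Rightarrow> real) \<Rightarrow> (real^'d \<Rightarrow> real) \<Rightarrow> real" where
  "eps_opt xs Nc f g = (\<Sum>k<Nc. \<bar>f (xs k) - g (xs k)\<bar>^2) / real Nc"

definition eps_approx :: "(real^'d) set \<Rightarrow> (real^'d \<Rightarrow> real) \<Rightarrow> (real^'d \<Rightarrow> real) \<Rightarrow> real" where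
  "eps_approx \<Omega> f g = L2norm \<Omega> (\<lambda>x. f x - g x)"

definition is_colloc_min :: "(real^'d \<Rightarrow> real) set \<Rightarrow> (nat \<Rightarrow> real^'d) \<Rightarrow> nat \<Rightarrow> (real^'d \<Rightarrow> real) \<Rightarrow> (real^'d \<Rightarrow> real) \<Rightarrow> bool" where
  "is_colloc_min V xs Nc target f \<longleftrightarrow> f \<in> V \<and> (\<forall>v\<in>V. eps_opt xs Nc f target \<le> eps_opt xs Nc v target)"

end

theory Submission
  imports Defs
begin

text \<open>Write \<open>e n\<close> for the \<open>L\<^sup>2\<close> error at time \<open>t n\<close>. The exact solution is transported,
  \<open>u (t (n+1)) = u (t n) \<circ> X (n+1)\<close>, so the error at time \<open>t (n+1)\<close> is the sum of the training
  error \<open>u\<theta> (n+1) - u\<theta>s (n+1)\<close> (at most \<open>\<epsilon>\<^sub>i\<^sub>n\<^sub>t + \<epsilon>\<^sub>o\<^sub>p\<^sub>t\<close>), the approximation error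
  \<open>u\<theta>s (n+1) - u\<theta> n \<circ> Xt (n+1)\<close>, the solver error \<open>u\<theta> n \<circ> Xt (n+1) - u\<theta> n \<circ> X (n+1)\<close> and the
  transported error \<open>(u\<theta> n - u (t n)) \<circ> X (n+1)\<close>.  By the change-of-variables formula,
  composing with the diffeomorphism \<open>X (n+1)\<close> multiplies \<open>L\<^sup>2\<close> norms by at most \<open>1 / d\<^sub>X\<close>.
  The hypothesis on the solver gives \<open>|Xt - X| \<le> Mp h^(p+1) B' + KR h^(2p+2)\<close>, with \<open>B'\<close> the sup
  norm of the \<open>(p+1)\<close>-th derivative of the characteristics; a second-order Taylor expansion of
  \<open>u\<theta> n\<close> then bounds the solver error by the \<open>h^(p+1)\<close> term of the theorem plus \<open>O(h^(2p+2))\<close>.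
  Unrolling the recursion \<open>e (n+1) \<le> a (n+1) + e n / d\<^sub>X (n+1)\<close> yields the weighted sums.\<close>

section \<open>Reindexing Euclidean space along a bijection of coordinates\<close>

text \<open>The change-of-variables theorem of HOL-Analysis requires the coordinate type to be
  well-ordered.  Every finite type is in bijection with the well-ordered type \<open>'a idx\<close> of the
  same cardinality, and all notions involved are invariant under such a relabelling.\<close>

typedef ('a::finite) idx = "{..<CARD('a)} :: nat set"
  morphisms rep_idx abs_idx
  by (rule exI[of _ 0]) (simp add: finite_UNIV_card_ge_0)

instantiation idx :: (finite) linorder
begin
definition "x \<le> y \<longleftrightarrow> rep_idx x \<le> rep_idx y"
definition "x < y \<longleftrightarrow> rep_idx x < rep_idx y"
instance by standard (auto simp: less_eq_idx_def less_idx_def rep_idx_inject)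
end

instance idx :: (finite) finite
  by standard (metis type_definition.univ[OF type_definition_idx] finite_imageI finite_lessThan)

instance idx :: (finite) wellorder
proof
  fix P :: "'a idx \<Rightarrow> bool" and a :: "'a idx"
  assume step: "\<And>x. (\<And>y. y < x \<Longrightarrow> P y) \<Longrightarrow> P x"
  show "P a"
    by (induct a rule: measure_induct_rule[of rep_idx]) (rule step, simp add: less_idx_def)
qed

lemma ex_bij_idx: "\<exists>\<psi>::'a::finite idx \<Rightarrow> 'a. bij \<psi>"
proof -
  have "CARD('a idx) = CARD('a)"
    using type_definition.card[OF type_definition_idx] by simp
  then show ?thesis
    using finite_same_card_bij[of "UNIV :: 'a idx set" "UNIV :: 'a set"] by auto
qed

lemma permutes_conj_bij:
  fixes \<psi> :: "'m::finite \<Rightarrow> 'n"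
  assumes \<psi>: "bij \<psi>" and q: "q permutes UNIV"
  shows "\<psi> \<circ> q \<circ> inv \<psi> permutes UNIV" "sign (\<psi> \<circ> q \<circ> inv \<psi>) = sign q"
proof -
  interpret permutes_bij_finite q UNIV UNIV \<psi> "inv \<psi>"
    "\<lambda>x. if x \<in> UNIV then \<psi> (q (inv \<psi> x)) else x"
    by unfold_locales (use q \<psi> in \<open>auto simp: bij_is_inj\<close>)
  have "\<psi> \<circ> q \<circ> inv \<psi> = (\<lambda>x. if x \<in> UNIV then \<psi> (q (inv \<psi> x)) else x)"
    by auto
  then show "\<psi> \<circ> q \<circ> inv \<psi> permutes UNIV" "sign (\<psi> \<circ> q \<circ> inv \<psi>) = sign q"
    using permutes_p' sign_p' by simp_all
qed

lemma det_reindex_bij: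
  fixes A :: "'a::comm_ring_1^'n::finite^'n" and \<psi> :: "'m::finite \<Rightarrow> 'n"
  assumes \<psi>: "bij \<psi>"
  shows "det ((\<chi> j k. A $ \<psi> j $ \<psi> k) :: 'a^'m^'m) = det A"
proof -
  let ?c = "\<lambda>q. \<psi> \<circ> q \<circ> inv \<psi>"
  have \<psi>': "bij (inv \<psi>)" and inv_inv: "inv (inv \<psi>) = \<psi>"
    using \<psi> by (simp_all add: bij_imp_bij_inv inv_inv_eq)
  have bij_conj: "bij_betw ?c {q. q permutes (UNIV::'m set)} {p. p permutes (UNIV::'n set)}"
  proof (rule bij_betw_byWitness[where f'="\<lambda>p. inv \<psi> \<circ> p \<circ> \<psi>"])
    show "\<forall>q\<in>{q. q permutes UNIV}. inv \<psi> \<circ> ?c q \<circ> \<psi> = q"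
      using \<psi> by (auto simp: fun_eq_iff bij_is_inj)
    show "\<forall>p\<in>{p. p permutes UNIV}. ?c (inv \<psi> \<circ> p \<circ> \<psi>) = p"
      using \<psi> by (auto simp: fun_eq_iff bij_is_surj surj_f_inv_f)
  qed (use permutes_conj_bij(1)[OF \<psi>] permutes_conj_bij(1)[OF \<psi>'] inv_inv in auto)
  have prod_conj: "(\<Prod>i\<in>UNIV. A $ i $ ?c q i) = (\<Prod>j\<in>UNIV. A $ \<psi> j $ \<psi> (q j))" for q
    using prod.reindex_bij_betw[of \<psi> UNIV UNIV "\<lambda>i. A $ i $ ?c q i"] \<psi> by (simp add: bij_is_inj)
  have "det A = (\<Sum>q | q permutes (UNIV::'m set). of_int (sign (?c q)) * (\<Prod>i\<in>UNIV. A $ i $ ?c q i))"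
    unfolding det_def
    using sum.reindex_bij_betw[OF bij_conj, of "\<lambda>p. of_int (sign p) * (\<Prod>i\<in>UNIV. A $ i $ p i)"]
    by simp
  also have "\<dots> = det ((\<chi> j k. A $ \<psi> j $ \<psi> k) :: 'a^'m^'m)"
    unfolding det_def using permutes_conj_bij(2)[OF \<psi>] prod_conj by (intro sum.cong) auto
  finally show ?thesis by simp
qed

definition reindex_vec :: "('e::finite \<Rightarrow> 'd::finite) \<Rightarrow> real^'d \<Rightarrow> real^'e" where
  "reindex_vec \<psi> x = (\<chi> j. x $ \<psi> j)"

lemma linear_reindex_vec: "linear (reindex_vec \<psi>)"
  by (auto simp: linear_iff vec_eq_iff reindex_vec_def)

lemma bounded_linear_reindex_vec: "bounded_linear (reindex_vec \<psi>)"
  by (simp add: linear_conv_bounded_linear[symmetric] linear_reindex_vec)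

lemma reindex_vec_inv:
  assumes "bij \<psi>"
  shows "reindex_vec (inv \<psi>) (reindex_vec \<psi> x) = x" "reindex_vec \<psi> (reindex_vec (inv \<psi>) y) = y"
  using assms by (auto simp: vec_eq_iff reindex_vec_def bij_is_surj surj_f_inv_f bij_is_inj)

lemma reindex_vec_image:
  assumes "bij \<psi>"
  shows "reindex_vec \<psi> ` S = reindex_vec (inv \<psi>) -` S"
  using reindex_vec_inv[OF assms] by (auto simp: image_iff) metis

lemma borel_measurable_reindex_vec[measurable]: "reindex_vec \<psi> \<in> borel_measurable borel"
  by (intro borel_measurable_continuous_onI linear_continuous_on bounded_linear_reindex_vec)

lemma prod_Basis_cart: "(\<Prod>b\<in>Basis. (x::real^'n::finite) \<bullet> b) = (\<Prod>i\<in>UNIV. x $ i)"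
  by (simp add: Basis_vec_def cart_eq_inner_axis axis_eq_axis prod.UNION_disjoint)

lemma distr_lborel_reindex_vec:
  fixes \<psi> :: "'e::finite \<Rightarrow> 'd::finite"
  assumes \<psi>: "bij \<psi>"
  shows "distr lborel borel (reindex_vec \<psi>) = lborel"
proof (rule lborel_eqI[symmetric])
  fix l u :: "real^'e"
  assume "\<And>b. b \<in> Basis \<Longrightarrow> l \<bullet> b \<le> u \<bullet> b"
  then have le: "l $ i \<le> u $ i" for i
    by (auto simp: Basis_vec_def cart_eq_inner_axis)
  let ?l = "reindex_vec (inv \<psi>) l" and ?u = "reindex_vec (inv \<psi>) u"
  have "x \<in> box ?l ?u \<longleftrightarrow> reindex_vec \<psi> x \<in> box l u" for x
  proof -
    have "x \<in> box ?l ?u \<longleftrightarrow> (\<forall>i. l $ inv \<psi> i < x $ i \<and> x $ i < u $ inv \<psi> i)"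
      by (simp add: mem_box_cart reindex_vec_def)
    also have "\<dots> \<longleftrightarrow> (\<forall>j. l $ j < x $ \<psi> j \<and> x $ \<psi> j < u $ j)"
      using \<psi> by (metis bij_inv_eq_iff)
    finally show ?thesis
      by (simp add: mem_box_cart reindex_vec_def)
  qed
  then have "reindex_vec \<psi> -` box l u = box ?l ?u"
    by auto
  then have "emeasure (distr lborel borel (reindex_vec \<psi>)) (box l u) = emeasure lborel (box ?l ?u)"
    by (simp add: emeasure_distr)
  also have "\<dots> = (\<Prod>b\<in>Basis. (?u - ?l) \<bullet> b)"
    using le by (intro emeasure_lborel_box) (auto simp: Basis_vec_def inner_axis reindex_vec_def)
  also have "(\<Prod>b\<in>Basis. (?u - ?l) \<bullet> b) = (\<Prod>i\<in>UNIV. u $ inv \<psi> i - l $ inv \<psi> i)"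
    by (simp add: prod_Basis_cart reindex_vec_def)
  also have "(\<Prod>i\<in>UNIV. u $ inv \<psi> i - l $ inv \<psi> i) = (\<Prod>j\<in>UNIV. u $ j - l $ j)"
    using prod.reindex_bij_betw[of "inv \<psi>" UNIV UNIV "\<lambda>j. u $ j - l $ j"] \<psi> bij_imp_bij_inv by auto
  finally show "emeasure (distr lborel borel (reindex_vec \<psi>)) (box l u) = (\<Prod>b\<in>Basis. (u - l) \<bullet> b)"
    by (simp add: prod_Basis_cart)
qed simp

lemma reindex_vec_measure_preserving:
  fixes \<psi> :: "'e::finite \<Rightarrow> 'd::finite"
  assumes \<psi>: "bij \<psi>"
  shows "reindex_vec \<psi> \<in> lebesgue \<rightarrow>\<^sub>M lebesgue" "distr lebesgue lebesgue (reindex_vec \<psi>) = lebesgue"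
proof -
  have "distr lebesgue lborel (reindex_vec \<psi>) = distr lborel lborel (reindex_vec \<psi>)"
    by (rule distr_completion) simp
  also have "\<dots> = distr lborel borel (reindex_vec \<psi>)"
    by (rule distr_cong) auto
  finally have "distr lebesgue lborel (reindex_vec \<psi>) = distr lborel borel (reindex_vec \<psi>)" .
  then have lborel: "distr lebesgue lborel (reindex_vec \<psi>) = lborel"
    using distr_lborel_reindex_vec[OF \<psi>] by simp
  then have null: "null_sets lborel = null_sets (distr lebesgue lborel (reindex_vec \<psi>))"
    by simp
  show "reindex_vec \<psi> \<in> lebesgue \<rightarrow>\<^sub>M lebesgue"
    by (simp add: completion.measurable_completion2 null measurable_completion)
  have "lebesgue = completion (distr lebesgue lborel (reindex_vec \<psi>))"
    using lborel by simp
  also have "\<dots> = distr lebesgue lebesgue (reindex_vec \<psi>)"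
    by (subst completion.completion_distr_eq) (auto simp: null measurable_completion)
  finally show "distr lebesgue lebesgue (reindex_vec \<psi>) = lebesgue" ..
qed

lemma reindex_vec_image_sets_lebesgue:
  fixes \<psi> :: "'e::finite \<Rightarrow> 'd::finite"
  assumes \<psi>: "bij \<psi>" and S: "S \<in> sets lebesgue"
  shows "reindex_vec \<psi> ` S \<in> sets lebesgue"
  using measurable_sets[OF reindex_vec_measure_preserving(1)[OF bij_imp_bij_inv[OF \<psi>]] S]
  by (simp add: reindex_vec_image[OF \<psi>])

lemma lebesgue_integral_reindex_vec:
  fixes \<psi> :: "'e::finite \<Rightarrow> 'd::finite" and g :: "real^'e \<Rightarrow> real"
  assumes \<psi>: "bij \<psi>" and S: "S \<in> sets lebesgue"
    and g: "integrable (lebesgue_on (reindex_vec \<psi> ` S)) g"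
  shows "integrable (lebesgue_on S) (\<lambda>x. g (reindex_vec \<psi> x))"
    "integral\<^sup>L (lebesgue_on S) (\<lambda>x. g (reindex_vec \<psi> x)) = integral\<^sup>L (lebesgue_on (reindex_vec \<psi> ` S)) g"
proof -
  let ?L = "reindex_vec \<psi>"
  have LS: "?L ` S \<in> sets lebesgue"
    by (rule reindex_vec_image_sets_lebesgue[OF \<psi> S])
  define G where "G = (\<lambda>y. indicator (?L ` S) y *\<^sub>R g y)"
  have G: "integrable lebesgue G"
    using g LS by (simp add: integrable_restrict_space G_def)
  have "indicator (?L ` S) (?L x) = (indicator S x :: real)" for x
    using reindex_vec_inv[OF \<psi>] by (auto simp: indicator_def image_iff) metis
  then have GL: "G (?L x) = indicator S x *\<^sub>R g (?L x)" for x
    by (simp add: G_def)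
  note distr = reindex_vec_measure_preserving[OF \<psi>]
  have "integrable lebesgue (\<lambda>x. G (?L x))"
    using G integrable_distr_eq[OF distr(1), of G] distr(2) by auto
  then show "integrable (lebesgue_on S) (\<lambda>x. g (?L x))"
    using S by (simp add: integrable_restrict_space GL)
  have "integral\<^sup>L lebesgue G = integral\<^sup>L lebesgue (\<lambda>x. G (?L x))"
    using integral_distr[OF distr(1), of G] distr(2) G by auto
  then have "integral\<^sup>L lebesgue G = integral\<^sup>L lebesgue (\<lambda>x. indicator S x *\<^sub>R g (?L x))"
    by (simp only: GL)
  then show "integral\<^sup>L (lebesgue_on S) (\<lambda>x. g (?L x)) = integral\<^sup>L (lebesgue_on (?L ` S)) g"
    using S LS by (simp add: integral_restrict_space G_def)
qed

lemma det_matrix_reindex_conj: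
  fixes \<psi> :: "'e::finite \<Rightarrow> 'd::finite" and A :: "real^'d \<Rightarrow> real^'d"
  assumes \<psi>: "bij \<psi>"
  shows "det (matrix (\<lambda>v. reindex_vec \<psi> (A (reindex_vec (inv \<psi>) v)))) = det (matrix A)"
proof -
  have "reindex_vec (inv \<psi>) (axis k 1) = axis (\<psi> k) 1" for k
    using \<psi> by (auto simp: reindex_vec_def vec_eq_iff axis_def bij_inv_eq_iff bij_is_inj)
  then have "matrix (\<lambda>v. reindex_vec \<psi> (A (reindex_vec (inv \<psi>) v))) = (\<chi> j k. matrix A $ \<psi> j $ \<psi> k)"
    by (simp add: matrix_def del: vec_lambda_beta) (simp add: vec_eq_iff reindex_vec_def)
  then show ?thesis
    using det_reindex_bij[OF \<psi>] by simp
qed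

lemma has_derivative_reindex_conj:
  fixes \<psi> :: "'e::finite \<Rightarrow> 'd::finite" and F :: "real^'d \<Rightarrow> real^'d"
  assumes \<psi>: "bij \<psi>" and F': "\<And>x. x \<in> S \<Longrightarrow> (F has_derivative F' x) (at x within S)"
    and y: "y \<in> reindex_vec \<psi> ` S"
  shows "((\<lambda>y. reindex_vec \<psi> (F (reindex_vec (inv \<psi>) y))) has_derivative
      (\<lambda>v. reindex_vec \<psi> (F' (reindex_vec (inv \<psi>) y) (reindex_vec (inv \<psi>) v))))
      (at y within reindex_vec \<psi> ` S)"
proof -
  let ?L = "reindex_vec \<psi>" and ?Li = "reindex_vec (inv \<psi>)"
  have "?Li ` ?L ` S = S"
    using reindex_vec_inv[OF \<psi>] by (force simp: image_image)
  then have "((\<lambda>y. F (?Li y)) has_derivative (\<lambda>v. F' (?Li y) (?Li v))) (at y within ?L ` S)"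
    by (intro has_derivative_in_compose2[of S F F' ?Li "?L ` S" y ?Li])
      (use F' y bounded_linear_reindex_vec in \<open>auto intro: bounded_linear_imp_has_derivative\<close>)
  then show ?thesis
    by (rule bounded_linear.has_derivative[OF bounded_linear_reindex_vec])
qed

section \<open>Change of variables for Lebesgue integrals on \<open>real^'n\<close>\<close>

lemma lebesgue_change_of_variables_wellorder:
  fixes F :: "real^'n::{finite,wellorder} \<Rightarrow> real^'n::_" and f :: "real^'n::_ \<Rightarrow> real"
  assumes S: "S \<in> sets lebesgue"
    and F': "\<And>x. x \<in> S \<Longrightarrow> (F has_derivative F' x) (at x within S)"
    and inj: "inj_on F S"
    and f: "integrable (lebesgue_on (F ` S)) f"
  shows "integrable (lebesgue_on S) (\<lambda>x. \<bar>det (matrix (F' x))\<bar> * f (F x))"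
    "integral\<^sup>L (lebesgue_on S) (\<lambda>x. \<bar>det (matrix (F' x))\<bar> * f (F x)) = integral\<^sup>L (lebesgue_on (F ` S)) f"
proof -
  let ?J = "\<lambda>x. \<bar>det (matrix (F' x))\<bar>"
  have FS: "F ` S \<in> sets lebesgue"
    using F' by (intro differentiable_image_in_sets_lebesgue[OF S])
      (auto simp: differentiable_on_def differentiable_def)
  \<comment> \<open>The library theorem is stated for integrands with values in some \<open>real^'m\<close>.\<close>
  define fv where "fv = (\<lambda>y. (\<chi> i. f y) :: real^1)"
  have fv_axis: "fv y \<bullet> axis i 1 = f y" for y i
    by (simp add: fv_def inner_axis)
  have f_abs: "f absolutely_integrable_on F ` S"
    using f FS by (simp add: set_integrable_def integrable_restrict_space)
  have fv: "fv absolutely_integrable_on F ` S"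
  proof (rule absolutely_integrable_componentwise)
    fix b :: "real^1"
    assume "b \<in> Basis"
    then obtain i where "b = axis i 1"
      by (auto simp: Basis_vec_def)
    then show "(\<lambda>x. fv x \<bullet> b) absolutely_integrable_on F ` S"
      using f_abs by (simp add: fv_axis)
  qed
  then have "(\<lambda>x. ?J x *\<^sub>R fv (F x)) absolutely_integrable_on S \<and>
      integral S (\<lambda>x. ?J x *\<^sub>R fv (F x)) = integral (F ` S) fv"
    using has_absolute_integral_change_of_variables[OF S F' inj, of fv "integral (F ` S) fv"] by blast
  then have Jfv: "(\<lambda>x. ?J x *\<^sub>R fv (F x)) absolutely_integrable_on S"
    and int_Jfv: "integral S (\<lambda>x. ?J x *\<^sub>R fv (F x)) = integral (F ` S) fv"
    by auto
  have Jf: "(\<lambda>x. ?J x * f (F x)) absolutely_integrable_on S"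
    using absolutely_integrable_component[OF Jfv, of "axis 1 1"] by (simp add: fv_axis)
  then show int: "integrable (lebesgue_on S) (\<lambda>x. ?J x * f (F x))"
    using S by (simp add: set_integrable_def integrable_restrict_space)
  have "integral S (\<lambda>x. ?J x * f (F x)) = integral S (\<lambda>x. ?J x *\<^sub>R fv (F x)) \<bullet> axis 1 1"
    using integral_component_eq[OF set_lebesgue_integral_eq_integral(1)[OF Jfv], of "axis 1 1"]
    by (simp add: fv_axis)
  also have "\<dots> = integral (F ` S) f"
    using int_Jfv integral_component_eq[OF set_lebesgue_integral_eq_integral(1)[OF fv], of "axis 1 1"]
    by (simp add: fv_axis)
  finally show "integral\<^sup>L (lebesgue_on S) (\<lambda>x. ?J x * f (F x)) = integral\<^sup>L (lebesgue_on (F ` S)) f"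
    using lebesgue_integral_eq_integral[OF int S] lebesgue_integral_eq_integral[OF f FS] by simp
qed

lemma lebesgue_change_of_variables:
  fixes F :: "real^'n::finite \<Rightarrow> real^'n" and f :: "real^'n \<Rightarrow> real"
  assumes S: "S \<in> sets lebesgue"
    and F': "\<And>x. x \<in> S \<Longrightarrow> (F has_derivative F' x) (at x within S)"
    and inj: "inj_on F S"
    and f: "integrable (lebesgue_on (F ` S)) f"
  shows "integrable (lebesgue_on S) (\<lambda>x. \<bar>det (matrix (F' x))\<bar> * f (F x))"
    "integral\<^sup>L (lebesgue_on S) (\<lambda>x. \<bar>det (matrix (F' x))\<bar> * f (F x)) = integral\<^sup>L (lebesgue_on (F ` S)) f"
proof -
  obtain \<psi> :: "'n idx \<Rightarrow> 'n" where \<psi>: "bij \<psi>"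
    using ex_bij_idx by blast
  let ?L = "reindex_vec \<psi>" and ?Li = "reindex_vec (inv \<psi>)"
  note LL = reindex_vec_inv[OF \<psi>]
  define Fh where "Fh = (\<lambda>y. ?L (F (?Li y)))"
  have FS: "F ` S \<in> sets lebesgue"
    using F' by (intro differentiable_image_in_sets_lebesgue[OF S])
      (auto simp: differentiable_on_def differentiable_def)
  have inj_Fh: "inj_on Fh (?L ` S)"
    using inj LL unfolding Fh_def inj_on_def by (metis imageE)
  have Fh_image: "Fh ` ?L ` S = ?L ` F ` S"
    unfolding Fh_def using LL by (force simp: image_image)
  have "?Li ` ?L ` F ` S = F ` S"
    using LL by (force simp: image_image)
  then have f': "integrable (lebesgue_on (Fh ` ?L ` S)) (\<lambda>y. f (?Li y))"
    and int_f': "integral\<^sup>L (lebesgue_on (Fh ` ?L ` S)) (\<lambda>y. f (?Li y)) = integral\<^sup>L (lebesgue_on (F ` S)) f"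
    using lebesgue_integral_reindex_vec[OF bij_imp_bij_inv[OF \<psi>] reindex_vec_image_sets_lebesgue[OF \<psi> FS]] f
    by (simp_all add: Fh_image)
  note cov = lebesgue_change_of_variables_wellorder[OF reindex_vec_image_sets_lebesgue[OF \<psi> S]
      has_derivative_reindex_conj[OF \<psi> F', folded Fh_def] inj_Fh f']
  have conj: "\<bar>det (matrix (\<lambda>v. ?L (F' (?Li (?L x)) (?Li v))))\<bar> * f (?Li (Fh (?L x)))
      = \<bar>det (matrix (F' x))\<bar> * f (F x)" for x
    using det_matrix_reindex_conj[OF \<psi>, of "F' x"] by (simp add: Fh_def LL)
  note pulled_back = lebesgue_integral_reindex_vec[OF \<psi> S cov(1)]
  show "integrable (lebesgue_on S) (\<lambda>x. \<bar>det (matrix (F' x))\<bar> * f (F x))"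
    using pulled_back(1) by (simp add: conj)
  show "integral\<^sup>L (lebesgue_on S) (\<lambda>x. \<bar>det (matrix (F' x))\<bar> * f (F x)) = integral\<^sup>L (lebesgue_on (F ` S)) f"
    using pulled_back(2) cov(2) int_f' by (simp add: conj)
qed

section \<open>Square-integrable functions and the \<open>L\<^sup>2\<close> norm\<close>

definition square_integrable :: "(real^'d) set \<Rightarrow> (real^'d \<Rightarrow> real) \<Rightarrow> bool" where
  "square_integrable \<Omega> f \<longleftrightarrow>
     f \<in> borel_measurable (lebesgue_on \<Omega>) \<and> integrable (lebesgue_on \<Omega>) (\<lambda>x. (f x)^2)"

lemma L2norm_real: "L2norm \<Omega> (f :: real^'d \<Rightarrow> real) = sqrt (integral\<^sup>L (lebesgue_on \<Omega>) (\<lambda>x. (f x)^2))"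
  by (simp add: L2norm_def)

lemma L2norm_nonneg: "0 \<le> L2norm \<Omega> f"
  by (simp add: L2norm_def integral_nonneg_AE)

lemma L2norm_cong:
  assumes "\<And>x. x \<in> \<Omega> \<Longrightarrow> f x = g x"
  shows "L2norm \<Omega> f = L2norm \<Omega> g"
proof -
  have "integral\<^sup>L (lebesgue_on \<Omega>) (\<lambda>x. (norm (f x))^2) = integral\<^sup>L (lebesgue_on \<Omega>) (\<lambda>x. (norm (g x))^2)"
    by (rule Bochner_Integration.integral_cong) (auto simp: assms)
  then show ?thesis
    by (simp add: L2norm_def)
qed

lemma square_integrable_dominated:
  assumes f: "f \<in> borel_measurable (lebesgue_on \<Omega>)" and g: "square_integrable \<Omega> g"
    and le: "\<And>x. x \<in> \<Omega> \<Longrightarrow> \<bar>f x\<bar> \<le> g x"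
  shows "square_integrable \<Omega> f" "L2norm \<Omega> f \<le> L2norm \<Omega> g"
proof -
  have g2: "integrable (lebesgue_on \<Omega>) (\<lambda>x. (g x)^2)"
    using g by (simp add: square_integrable_def)
  have sq: "(f x)^2 \<le> (g x)^2" if "x \<in> \<Omega>" for x
    using le[OF that] by (metis abs_le_square_iff abs_of_nonneg abs_ge_zero order_trans)
  have f2: "integrable (lebesgue_on \<Omega>) (\<lambda>x. (f x)^2)"
    by (rule Bochner_Integration.integrable_bound[OF g2]) (use f sq in \<open>auto intro!: AE_I2\<close>)
  then show "square_integrable \<Omega> f"
    using f by (simp add: square_integrable_def)
  have "integral\<^sup>L (lebesgue_on \<Omega>) (\<lambda>x. (f x)^2) \<le> integral\<^sup>L (lebesgue_on \<Omega>) (\<lambda>x. (g x)^2)"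
    by (rule Bochner_Integration.integral_mono[OF f2 g2]) (use sq in auto)
  then show "L2norm \<Omega> f \<le> L2norm \<Omega> g"
    by (simp add: L2norm_real)
qed

lemma square_integrable_cmult:
  assumes "square_integrable \<Omega> f"
  shows "square_integrable \<Omega> (\<lambda>x. c * f x)" "L2norm \<Omega> (\<lambda>x. c * f x) = \<bar>c\<bar> * L2norm \<Omega> f"
proof -
  have sq: "(\<lambda>x. (c * f x)^2) = (\<lambda>x. c^2 * (f x)^2)"
    by (simp add: power_mult_distrib)
  show "square_integrable \<Omega> (\<lambda>x. c * f x)"
    using assms by (auto simp: square_integrable_def sq)
  show "L2norm \<Omega> (\<lambda>x. c * f x) = \<bar>c\<bar> * L2norm \<Omega> f"
    by (simp add: L2norm_real sq real_sqrt_mult)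
qed

lemma square_le_weighted_sum:
  fixes x y a b :: real
  assumes "0 < a" "0 < b"
  shows "(x + y)^2 \<le> (a + b) * (x^2 / a + y^2 / b)"
proof -
  have "(a + b) * (x^2 / a + y^2 / b) - (x + y)^2 = (b * x - a * y)^2 / (a * b)"
    using assms by (simp add: field_simps power2_eq_square)
  moreover have "0 \<le> (b * x - a * y)^2 / (a * b)"
    using assms by simp
  ultimately show ?thesis
    by linarith
qed

lemma square_integrable_add:
  assumes f: "square_integrable \<Omega> f" and g: "square_integrable \<Omega> g"
  shows "square_integrable \<Omega> (\<lambda>x. f x + g x)"
proof -
  have meas: "(\<lambda>x. f x + g x) \<in> borel_measurable (lebesgue_on \<Omega>)"
    using f g by (auto simp: square_integrable_def)
  have "integrable (lebesgue_on \<Omega>) (\<lambda>x. 2 * (f x)^2 + 2 * (g x)^2)"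
    using f g by (simp add: square_integrable_def)
  then have "integrable (lebesgue_on \<Omega>) (\<lambda>x. (f x + g x)^2)"
  proof (rule Bochner_Integration.integrable_bound)
    show "(\<lambda>x. (f x + g x)^2) \<in> borel_measurable (lebesgue_on \<Omega>)"
      using meas by simp
    have "(f x + g x)^2 \<le> 2 * (f x)^2 + 2 * (g x)^2" for x
      using square_le_weighted_sum[of 1 1 "f x" "g x"] by simp
    then show "AE x in lebesgue_on \<Omega>. norm ((f x + g x)^2) \<le> norm (2 * (f x)^2 + 2 * (g x)^2)"
      by (intro AE_I2) simp
  qed
  with meas show ?thesis
    by (simp add: square_integrable_def)
qed

text \<open>Minkowski's inequality for arbitrary bounds \<open>a, b\<close> of the norms: integrate
  \<open>(f + g)\<^sup>2 \<le> (a + b) (f\<^sup>2/a + g\<^sup>2/b)\<close>.\<close>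

lemma L2norm_add_le_bounds:
  assumes f: "square_integrable \<Omega> f" and g: "square_integrable \<Omega> g"
    and a: "0 < a" "L2norm \<Omega> f \<le> a" and b: "0 < b" "L2norm \<Omega> g \<le> b"
  shows "L2norm \<Omega> (\<lambda>x. f x + g x) \<le> a + b"
proof -
  let ?A = "integral\<^sup>L (lebesgue_on \<Omega>) (\<lambda>x. (f x)^2)"
  let ?B = "integral\<^sup>L (lebesgue_on \<Omega>) (\<lambda>x. (g x)^2)"
  have f2: "integrable (lebesgue_on \<Omega>) (\<lambda>x. (f x)^2)" and g2: "integrable (lebesgue_on \<Omega>) (\<lambda>x. (g x)^2)"
    using f g by (auto simp: square_integrable_def)
  have fg2: "integrable (lebesgue_on \<Omega>) (\<lambda>x. (f x + g x)^2)"
    using square_integrable_add[OF f g] by (simp add: square_integrable_def)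
  have "?A = (L2norm \<Omega> f)^2" "?B = (L2norm \<Omega> g)^2"
    by (simp_all add: L2norm_real integral_nonneg_AE)
  then have "?A \<le> a^2" "?B \<le> b^2"
    using a b L2norm_nonneg[of \<Omega> f] L2norm_nonneg[of \<Omega> g] by (simp_all add: power_mono)
  then have A: "?A / a \<le> a" and B: "?B / b \<le> b"
    using a b by (simp_all add: divide_le_eq power2_eq_square)
  have "integral\<^sup>L (lebesgue_on \<Omega>) (\<lambda>x. (f x + g x)^2)
      \<le> integral\<^sup>L (lebesgue_on \<Omega>) (\<lambda>x. (a + b) * ((f x)^2 / a + (g x)^2 / b))"
    using f2 g2 by (intro Bochner_Integration.integral_mono[OF fg2] square_le_weighted_sum a b) simp
  also have "\<dots> = (a + b) * (?A / a + ?B / b)"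
    using f2 g2 by simp
  also have "\<dots> \<le> (a + b)^2"
    using A B a b by (simp add: power2_eq_square mult_left_mono)
  finally show ?thesis
    unfolding L2norm_real using a b by (intro real_le_lsqrt) simp_all
qed

lemma L2norm_add_le:
  assumes f: "square_integrable \<Omega> f" and g: "square_integrable \<Omega> g"
  shows "L2norm \<Omega> (\<lambda>x. f x + g x) \<le> L2norm \<Omega> f + L2norm \<Omega> g"
proof (rule field_le_epsilon)
  fix e :: real
  assume "0 < e"
  then have "L2norm \<Omega> (\<lambda>x. f x + g x) \<le> (L2norm \<Omega> f + e / 2) + (L2norm \<Omega> g + e / 2)"
    using L2norm_nonneg[of \<Omega> f] L2norm_nonneg[of \<Omega> g] by (intro L2norm_add_le_bounds[OF f g]) auto
  then show "L2norm \<Omega> (\<lambda>x. f x + g x) \<le> L2norm \<Omega> f + L2norm \<Omega> g + e"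
    by simp
qed

lemma square_integrable_diff:
  assumes f: "square_integrable \<Omega> f" and g: "square_integrable \<Omega> g"
  shows "square_integrable \<Omega> (\<lambda>x. f x - g x)"
  using square_integrable_add[OF f square_integrable_cmult(1)[OF g, of "-1"]] by simp

lemma L2norm_diff_triangle:
  assumes f: "square_integrable \<Omega> f" and g: "square_integrable \<Omega> g" and h: "square_integrable \<Omega> h"
  shows "L2norm \<Omega> (\<lambda>x. f x - h x) \<le> L2norm \<Omega> (\<lambda>x. f x - g x) + L2norm \<Omega> (\<lambda>x. g x - h x)"
  using L2norm_add_le[OF square_integrable_diff[OF f g] square_integrable_diff[OF g h]] by simp

lemma square_integrable_const:
  assumes "\<Omega> \<in> lmeasurable"
  shows "square_integrable \<Omega> (\<lambda>x. c)" "L2norm \<Omega> (\<lambda>x. c) = \<bar>c\<bar> * sqrt (measure lebesgue \<Omega>)"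
proof -
  have \<Omega>: "\<Omega> \<in> sets lebesgue"
    using assms by auto
  show "square_integrable \<Omega> (\<lambda>x. c)"
    using assms \<Omega> by (simp add: square_integrable_def integrable_restrict_space fmeasurable_def)
  have "integral\<^sup>L (lebesgue_on \<Omega>) (\<lambda>x. c^2) = c^2 * measure lebesgue \<Omega>"
    using \<Omega> by (simp add: measure_restrict_space)
  then show "L2norm \<Omega> (\<lambda>x. c) = \<bar>c\<bar> * sqrt (measure lebesgue \<Omega>)"
    by (simp add: L2norm_real real_sqrt_mult)
qed

lemma square_integrable_continuous_comp:
  fixes f :: "'a::heine_borel \<Rightarrow> real"
  assumes \<Omega>: "\<Omega> \<in> lmeasurable" and f: "continuous_on UNIV f"
    and \<phi>: "\<phi> \<in> borel_measurable (lebesgue_on \<Omega>)" and K: "bounded K" and \<phi>K: "\<And>x. x \<in> \<Omega> \<Longrightarrow> \<phi> x \<in> K"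
  shows "square_integrable \<Omega> (\<lambda>x. f (\<phi> x))"
proof -
  have "compact (closure K)"
    using K by (simp add: compact_closure)
  then have "compact (f ` closure K)"
    by (rule compact_continuous_image[OF continuous_on_subset[OF f subset_UNIV]])
  then obtain M where M: "\<And>y. y \<in> closure K \<Longrightarrow> \<bar>f y\<bar> \<le> M"
    by (metis bounded_iff compact_imp_bounded imageI real_norm_def)
  have "(\<lambda>x. f (\<phi> x)) \<in> borel_measurable (lebesgue_on \<Omega>)"
    using measurable_compose[OF \<phi> borel_measurable_continuous_onI[OF f]] by (simp add: o_def)
  then show ?thesis
  proof (rule square_integrable_dominated(1)[OF _ square_integrable_const(1)[OF \<Omega>]])
    fix x
    assume "x \<in> \<Omega>"
    then show "\<bar>f (\<phi> x)\<bar> \<le> M"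
      using M \<phi>K closure_subset by blast
  qed
qed

lemma square_integrable_continuous:
  assumes "\<Omega> \<in> lmeasurable" "bounded \<Omega>" "continuous_on UNIV f"
  shows "square_integrable \<Omega> f"
proof -
  have "(\<lambda>x. x) \<in> borel_measurable (lebesgue_on \<Omega>)"
    using continuous_imp_measurable_on_sets_lebesgue[OF continuous_on_id] assms(1) by blast
  then show ?thesis
    using square_integrable_continuous_comp[OF assms(1,3) _ assms(2)] by simp
qed

section \<open>Composition with a diffeomorphism\<close>

lemma L2norm_comp_le:
  fixes F :: "real^'n::finite \<Rightarrow> real^'n" and w :: "real^'n \<Rightarrow> real"
  assumes S: "S \<in> sets lebesgue" and FS: "F ` S = S" and inj: "inj_on F S"
    and F': "\<And>x. x \<in> S \<Longrightarrow> (F has_derivative F' x) (at x within S)"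
    and c: "0 < c" and J: "\<And>x. x \<in> S \<Longrightarrow> c \<le> \<bar>det (matrix (F' x))\<bar>"
    and w: "square_integrable S w" and wF: "(\<lambda>x. w (F x)) \<in> borel_measurable (lebesgue_on S)"
  shows "square_integrable S (\<lambda>x. w (F x))" "L2norm S (\<lambda>x. w (F x)) \<le> L2norm S w / sqrt c"
proof -
  let ?J = "\<lambda>x. \<bar>det (matrix (F' x))\<bar>"
  have "integrable (lebesgue_on (F ` S)) (\<lambda>y. (w y)^2)"
    using w FS by (simp add: square_integrable_def)
  note cov = lebesgue_change_of_variables[OF S F' inj this, unfolded FS]
  have pointwise: "(w (F x))^2 \<le> (1 / c) * (?J x * (w (F x))^2)" if "x \<in> S" for x
  proof -
    have "c * (w (F x))^2 \<le> ?J x * (w (F x))^2"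
      using J[OF that] by (simp add: mult_right_mono)
    then show ?thesis
      using c by (simp add: field_simps)
  qed
  have bound: "integrable (lebesgue_on S) (\<lambda>x. (1 / c) * (?J x * (w (F x))^2))"
    using cov(1) by simp
  have wF2: "integrable (lebesgue_on S) (\<lambda>x. (w (F x))^2)"
    by (rule Bochner_Integration.integrable_bound[OF bound])
      (use wF pointwise c in \<open>auto intro!: AE_I2 simp: abs_mult\<close>)
  then show "square_integrable S (\<lambda>x. w (F x))"
    using wF by (simp add: square_integrable_def)
  have "integral\<^sup>L (lebesgue_on S) (\<lambda>x. (w (F x))^2)
      \<le> integral\<^sup>L (lebesgue_on S) (\<lambda>x. (1 / c) * (?J x * (w (F x))^2))"
    by (rule Bochner_Integration.integral_mono[OF wF2 bound]) (use pointwise in auto)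
  also have "\<dots> = (1 / c) * integral\<^sup>L (lebesgue_on S) (\<lambda>y. (w y)^2)"
    using cov(2) by simp
  finally have "sqrt (integral\<^sup>L (lebesgue_on S) (\<lambda>x. (w (F x))^2))
      \<le> sqrt (1 / c) * sqrt (integral\<^sup>L (lebesgue_on S) (\<lambda>y. (w y)^2))"
    by (metis real_sqrt_le_mono real_sqrt_mult)
  then show "L2norm S (\<lambda>x. w (F x)) \<le> L2norm S w / sqrt c"
    by (simp add: L2norm_real real_sqrt_divide)
qed

lemma C1_diffeo_onto_has_derivative:
  assumes "C1_diffeo_onto \<Omega> F" "x \<in> \<Omega>"
  shows "(F has_derivative frechet_derivative F (at x)) (at x within \<Omega>)"
  using assms frechet_derivative_works has_derivative_at_withinI
  by (fastforce simp: C1_diffeo_onto_def C1_on_def)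

lemma C1_diffeo_onto_continuous_on:
  assumes "C1_diffeo_onto \<Omega> F"
  shows "continuous_on \<Omega> F"
  using assms by (intro differentiable_imp_continuous_on)
    (auto simp: C1_diffeo_onto_def C1_on_def differentiable_at_imp_differentiable_on)

lemma C1_diffeo_onto_in:
  assumes "C1_diffeo_onto \<Omega> F" "x \<in> \<Omega>"
  shows "F x \<in> \<Omega>"
  using assms by (auto simp: C1_diffeo_onto_def)

lemma C1_diffeo_onto_inj_on:
  assumes "C1_diffeo_onto \<Omega> F"
  shows "inj_on F \<Omega>"
proof -
  obtain G where "\<forall>y\<in>\<Omega>. G (F y) = y"
    using assms by (auto simp: C1_diffeo_onto_def)
  then show ?thesis
    by (metis inj_onI)
qed

lemma L2norm_comp_diffeo_le:
  assumes \<Omega>: "\<Omega> \<in> sets lebesgue" and F: "C1_diffeo_onto \<Omega> F" and d: "0 < dX \<Omega> F"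
    and w: "square_integrable \<Omega> w" and wF: "(\<lambda>x. w (F x)) \<in> borel_measurable (lebesgue_on \<Omega>)"
  shows "square_integrable \<Omega> (\<lambda>x. w (F x))" "L2norm \<Omega> (\<lambda>x. w (F x)) \<le> L2norm \<Omega> w / dX \<Omega> F"
proof -
  define I where "I = (INF y\<in>\<Omega>. \<bar>det (jacobian F (at y))\<bar>)"
  have dX: "dX \<Omega> F = sqrt I"
    by (simp add: dX_def I_def)
  then have I: "0 < I"
    using d by simp
  have "I \<le> \<bar>det (matrix (frechet_derivative F (at x)))\<bar>" if "x \<in> \<Omega>" for x
    unfolding I_def jacobian_def[symmetric] by (rule cINF_lower[OF _ that]) (auto intro: bdd_belowI[where m=0])
  note comp = L2norm_comp_le[OF \<Omega> _ C1_diffeo_onto_inj_on[OF F] C1_diffeo_onto_has_derivative[OF F] I this w wF]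
  have "F ` \<Omega> = \<Omega>"
    using F by (simp add: C1_diffeo_onto_def)
  then show "square_integrable \<Omega> (\<lambda>x. w (F x))" "L2norm \<Omega> (\<lambda>x. w (F x)) \<le> L2norm \<Omega> w / dX \<Omega> F"
    using comp by (simp_all add: dX)
qed

lemma measurable_continuous_comp_diffeo:
  assumes "\<Omega> \<in> sets lebesgue" "C1_diffeo_onto \<Omega> F" "continuous_on UNIV w"
  shows "(\<lambda>x. w (F x)) \<in> borel_measurable (lebesgue_on \<Omega>)"
proof -
  have "continuous_on \<Omega> (\<lambda>x. w (F x))"
    using continuous_on_compose[OF C1_diffeo_onto_continuous_on[OF assms(2)]
        continuous_on_subset[OF assms(3)]] by (simp add: o_def)
  then show ?thesis
    using continuous_imp_measurable_on_sets_lebesgue assms(1) by blast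
qed

section \<open>Functions with bounded Hessian\<close>

lemma grad_has_derivative:
  fixes f :: "real^'d \<Rightarrow> real"
  assumes "f differentiable (at x)"
  shows "(f has_derivative (\<lambda>v. grad f x \<bullet> v)) (at x)"
proof -
  let ?D = "frechet_derivative f (at x)"
  have D: "(f has_derivative ?D) (at x)"
    using assms frechet_derivative_works by blast
  have "?D v = grad f x \<bullet> v" for v
  proof -
    have "?D v = ?D (\<Sum>i\<in>UNIV. v $ i *\<^sub>R axis i 1)"
      using basis_expansion[of v] by (simp add: scalar_mult_eq_scaleR)
    also have "\<dots> = (\<Sum>i\<in>UNIV. v $ i * ?D (axis i 1))"
      using has_derivative_linear[OF D] by (simp add: linear_sum linear_scale)
    also have "\<dots> = grad f x \<bullet> v"
      by (simp add: grad_def inner_vec_def mult.commute)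
    finally show ?thesis .
  qed
  with D show ?thesis
    by (metis (no_types, lifting) ext)
qed

lemma C2_everywhere_grad_has_derivative:
  assumes "C2_everywhere f"
  shows "(grad f has_derivative hess f x) (at x)"
  using assms frechet_derivative_works
  by (auto simp: C2_everywhere_def C1_on_def hess_def)

lemma C2_everywhere_continuous:
  assumes "C2_everywhere f"
  shows "continuous_on UNIV f"
  using assms by (intro differentiable_imp_continuous_on)
    (auto simp: C2_everywhere_def differentiable_at_imp_differentiable_on)

lemma C2_everywhere_continuous_grad:
  assumes "C2_everywhere f"
  shows "continuous_on UNIV (grad f)"
  using assms by (intro differentiable_imp_continuous_on)
    (auto simp: C2_everywhere_def C1_on_def differentiable_at_imp_differentiable_on)

lemma hess_bound_nonneg:
  assumes "C2_everywhere f" "\<And>x. onorm (hess f x) \<le> H"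
  shows "0 \<le> H"
  using assms(2)[of 0] onorm_pos_le[OF has_derivative_bounded_linear[OF C2_everywhere_grad_has_derivative[OF assms(1), of 0]]]
  by linarith

text \<open>Not sharp (\<open>H / 2\<close> would do), but sufficient here.\<close>

lemma taylor_hess_bound:
  fixes f :: "real^'d \<Rightarrow> real"
  assumes f: "C2_everywhere f" and H: "\<And>x. onorm (hess f x) \<le> H"
  shows "\<bar>f y - f x\<bar> \<le> norm (grad f x) * norm (y - x) + H * (norm (y - x))^2"
proof -
  have H0: "0 \<le> H"
    by (rule hess_bound_nonneg[OF f H])
  have lip: "norm (grad f z - grad f x) \<le> H * norm (z - x)" for z
    by (rule differentiable_bound[OF convex_UNIV]) (use C2_everywhere_grad_has_derivative[OF f] H in auto)
  define \<psi> where "\<psi> z = f z - grad f x \<bullet> z" for z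
  have \<psi>': "(\<psi> has_derivative (\<lambda>v. (grad f z - grad f x) \<bullet> v)) (at z within closed_segment x y)" for z
  proof -
    have "f differentiable (at z)"
      using f by (simp add: C2_everywhere_def)
    then have "((\<lambda>z. f z - grad f x \<bullet> z) has_derivative (\<lambda>v. grad f z \<bullet> v - grad f x \<bullet> v)) (at z)"
      by (intro has_derivative_diff grad_has_derivative bounded_linear_imp_has_derivative
          bounded_linear_inner_right)
    then show ?thesis
      unfolding \<psi>_def by (auto simp: inner_diff_left intro: has_derivative_at_withinI)
  qed
  have "onorm (\<lambda>v. (grad f z - grad f x) \<bullet> v) \<le> H * norm (y - x)" if "z \<in> closed_segment x y" for z
  proof -
    have "norm (z - x) \<le> norm (y - x)"
      using that by (metis dist_commute dist_in_closed_segment dist_norm)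
    then have "norm (grad f z - grad f x) \<le> H * norm (y - x)"
      using lip[of z] H0 by (meson mult_left_mono order_trans)
    moreover have "onorm (\<lambda>v. (grad f z - grad f x) \<bullet> v) \<le> norm (grad f z - grad f x)"
      by (rule onorm_le) (simp add: Cauchy_Schwarz_ineq2)
    ultimately show ?thesis
      by simp
  qed
  then have "norm (\<psi> y - \<psi> x) \<le> H * norm (y - x) * norm (y - x)"
    by (intro differentiable_bound[OF convex_closed_segment \<psi>']) auto
  then have "\<bar>f y - f x - grad f x \<bullet> (y - x)\<bar> \<le> H * (norm (y - x))^2"
    by (simp add: \<psi>_def inner_diff_right power2_eq_square algebra_simps)
  moreover have "\<bar>grad f x \<bullet> (y - x)\<bar> \<le> norm (grad f x) * norm (y - x)"
    by (rule Cauchy_Schwarz_ineq2)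
  ultimately show ?thesis
    by linarith
qed

section \<open>The one-step error estimate\<close>

lemma L2norm_le_eps_int_eps_opt:
  "L2norm \<Omega> (\<lambda>x. f x - g x) \<le> eps_int \<Omega> xs Nc (\<lambda>x. f x - g x) + eps_opt xs Nc f g"
  unfolding eps_int_def eps_opt_def by linarith

lemma norm_le_supnorm_on:
  assumes "\<And>x. x \<in> \<Omega> \<Longrightarrow> norm (D x) \<le> B" "x \<in> \<Omega>"
  shows "norm (D x) \<le> supnorm_on \<Omega> D"
  unfolding supnorm_on_def using assms by (intro cSUP_upper bdd_aboveI2) auto

lemma supnorm_on_le:
  assumes "\<Omega> \<noteq> {}" "\<And>x. x \<in> \<Omega> \<Longrightarrow> norm (D x) \<le> B"
  shows "supnorm_on \<Omega> D \<le> B"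
  unfolding supnorm_on_def using assms by (intro cSUP_least) auto

lemma square_integrable_comp_near:
  fixes w :: "real^'d \<Rightarrow> real"
  assumes \<Omega>: "\<Omega> \<in> lmeasurable" "bounded \<Omega>" and w: "continuous_on UNIV w"
    and F: "\<And>x. x \<in> \<Omega> \<Longrightarrow> F x \<in> \<Omega>"
    and G: "G \<in> borel_measurable (lebesgue_on \<Omega>)" "\<And>x. x \<in> \<Omega> \<Longrightarrow> norm (G x - F x) \<le> \<delta>"
  shows "square_integrable \<Omega> (\<lambda>x. w (G x))"
proof -
  obtain R where R: "\<And>x. x \<in> \<Omega> \<Longrightarrow> norm x \<le> R"
    using \<Omega>(2) by (auto simp: bounded_iff)
  have "G x \<in> cball 0 (R + \<delta>)" if "x \<in> \<Omega>" for x
    using norm_triangle_sub[of "G x" "F x"] R[OF F[OF that]] G(2)[OF that] by simp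
  then show ?thesis
    by (intro square_integrable_continuous_comp[OF \<Omega>(1) w G(1) bounded_cball])
qed

lemma L2norm_comp_perturbation_le:
  fixes w :: "real^'d \<Rightarrow> real"
  assumes \<Omega>: "open \<Omega>" "bounded \<Omega>"
    and F: "C1_diffeo_onto \<Omega> F" "0 < dX \<Omega> F"
    and w: "C2_everywhere w" "\<And>x. onorm (hess w x) \<le> H"
    and G: "G \<in> borel_measurable (lebesgue_on \<Omega>)" "\<And>x. x \<in> \<Omega> \<Longrightarrow> norm (G x - F x) \<le> \<delta>"
    and \<delta>: "0 \<le> \<delta>"
  shows "L2norm \<Omega> (\<lambda>x. w (G x) - w (F x))
       \<le> \<delta> * L2norm \<Omega> (grad w) / dX \<Omega> F + H * \<delta>^2 * sqrt (measure lebesgue \<Omega>)"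
proof -
  have lmeas: "\<Omega> \<in> lmeasurable"
    using lmeasurable_open[OF \<Omega>(2,1)] .
  then have meas: "\<Omega> \<in> sets lebesgue"
    by (simp add: fmeasurableD)
  have w_cont: "continuous_on UNIV w"
    by (rule C2_everywhere_continuous[OF w(1)])
  define g where "g y = norm (grad w y)" for y
  have g_cont: "continuous_on UNIV g"
    unfolding g_def by (intro continuous_on_norm C2_everywhere_continuous_grad[OF w(1)])
  note gF = L2norm_comp_diffeo_le[OF meas F square_integrable_continuous[OF lmeas \<Omega>(2) g_cont]
      measurable_continuous_comp_diffeo[OF meas F(1) g_cont]]
  have "L2norm \<Omega> g = L2norm \<Omega> (grad w)"
    by (simp add: g_def L2norm_def)
  with gF(2) have gF_le: "L2norm \<Omega> (\<lambda>x. g (F x)) \<le> L2norm \<Omega> (grad w) / dX \<Omega> F"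
    by simp
  have H: "0 \<le> H"
    by (rule hess_bound_nonneg[OF w])
  have pointwise: "\<bar>w (G x) - w (F x)\<bar> \<le> \<delta> * g (F x) + H * \<delta>^2" if "x \<in> \<Omega>" for x
  proof -
    have "\<bar>w (G x) - w (F x)\<bar> \<le> g (F x) * norm (G x - F x) + H * (norm (G x - F x))^2"
      unfolding g_def by (rule taylor_hess_bound[OF w])
    also have "\<dots> \<le> g (F x) * \<delta> + H * \<delta>^2"
      using G(2)[OF that] H by (intro add_mono mult_left_mono power_mono) (auto simp: g_def)
    finally show ?thesis
      by (simp add: mult.commute)
  qed
  have wG: "square_integrable \<Omega> (\<lambda>x. w (G x))"
    by (rule square_integrable_comp_near[OF lmeas \<Omega>(2) w_cont C1_diffeo_onto_in[OF F(1)] G])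
  note wF = L2norm_comp_diffeo_le(1)[OF meas F square_integrable_continuous[OF lmeas \<Omega>(2) w_cont]
      measurable_continuous_comp_diffeo[OF meas F(1) w_cont]]
  note scaled = square_integrable_cmult[OF gF(1), of \<delta>]
  note const = square_integrable_const[OF lmeas, of "H * \<delta>^2"]
  have "L2norm \<Omega> (\<lambda>x. w (G x) - w (F x)) \<le> L2norm \<Omega> (\<lambda>x. \<delta> * g (F x) + H * \<delta>^2)"
    using square_integrable_diff[OF wG wF] pointwise
    by (intro square_integrable_dominated(2)[OF _ square_integrable_add[OF scaled(1) const(1)]])
      (auto simp: square_integrable_def)
  also have "\<dots> \<le> \<delta> * L2norm \<Omega> (\<lambda>x. g (F x)) + H * \<delta>^2 * sqrt (measure lebesgue \<Omega>)"
    using L2norm_add_le[OF scaled(1) const(1)] scaled(2) const(2) \<delta> H by simp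
  also have "\<dots> \<le> \<delta> * L2norm \<Omega> (grad w) / dX \<Omega> F + H * \<delta>^2 * sqrt (measure lebesgue \<Omega>)"
    using mult_left_mono[OF gF_le \<delta>] by simp
  finally show ?thesis .
qed

lemma L2norm_transport_step_le:
  fixes w v v' u u' :: "real^'d \<Rightarrow> real"
  assumes \<Omega>: "open \<Omega>" "bounded \<Omega>"
    and F: "C1_diffeo_onto \<Omega> F" "0 < dX \<Omega> F"
    and w: "C2_everywhere w" "\<And>x. onorm (hess w x) \<le> H"
    and v: "square_integrable \<Omega> v" and v': "square_integrable \<Omega> v'" "\<And>x. x \<in> \<Omega> \<Longrightarrow> v' x = v (F x)"
    and G: "G \<in> borel_measurable (lebesgue_on \<Omega>)" "\<And>x. x \<in> \<Omega> \<Longrightarrow> norm (G x - F x) \<le> \<delta>"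
    and \<delta>: "0 \<le> \<delta>"
    and u: "continuous_on UNIV u" and u': "continuous_on UNIV u'"
  shows "L2norm \<Omega> (\<lambda>x. u x - v' x)
    \<le> L2norm \<Omega> (\<lambda>x. u x - u' x) + eps_approx \<Omega> u' (\<lambda>x. w (G x))
      + (\<delta> * L2norm \<Omega> (grad w) + L2norm \<Omega> (\<lambda>x. w x - v x)) / dX \<Omega> F
      + H * \<delta>^2 * sqrt (measure lebesgue \<Omega>)"
proof -
  have lmeas: "\<Omega> \<in> lmeasurable"
    using lmeasurable_open[OF \<Omega>(2,1)] .
  then have meas: "\<Omega> \<in> sets lebesgue"
    by (simp add: fmeasurableD)
  have w_cont: "continuous_on UNIV w"
    by (rule C2_everywhere_continuous[OF w(1)])
  note sq_cont = square_integrable_continuous[OF lmeas \<Omega>(2)]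
  have wG: "square_integrable \<Omega> (\<lambda>x. w (G x))"
    by (rule square_integrable_comp_near[OF lmeas \<Omega>(2) w_cont C1_diffeo_onto_in[OF F(1)] G])
  note wF = L2norm_comp_diffeo_le(1)[OF meas F sq_cont[OF w_cont]
      measurable_continuous_comp_diffeo[OF meas F(1) w_cont]]
  have "(\<lambda>x. w (F x) - v' x) \<in> borel_measurable (lebesgue_on \<Omega>)"
    using square_integrable_diff[OF wF v'(1)] by (simp add: square_integrable_def)
  then have "(\<lambda>x. w (F x) - v (F x)) \<in> borel_measurable (lebesgue_on \<Omega>)"
    by (rule measurable_cong[THEN iffD1, rotated]) (simp add: v'(2))
  note transported = L2norm_comp_diffeo_le(2)[OF meas F square_integrable_diff[OF sq_cont[OF w_cont] v] this]
  have "L2norm \<Omega> (\<lambda>x. w (F x) - v' x) = L2norm \<Omega> (\<lambda>x. w (F x) - v (F x))"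
    by (rule L2norm_cong) (simp add: v'(2))
  \<comment> \<open>Telescope \<open>u - v'\<close> through \<open>u'\<close>, \<open>w \<circ> G\<close> and \<open>w \<circ> F\<close>.\<close>
  moreover note L2norm_diff_triangle[OF sq_cont[OF u] sq_cont[OF u'] v'(1)]
    L2norm_diff_triangle[OF sq_cont[OF u'] wG v'(1)] L2norm_diff_triangle[OF wG wF v'(1)]
    L2norm_comp_perturbation_le[OF \<Omega> F w G \<delta>]
  ultimately show ?thesis
    using transported by (simp add: eps_approx_def add_divide_distrib)
qed

lemma expansion_remainder_sq_le:
  fixes h :: real and p :: nat
  assumes "0 \<le> Mp" "0 \<le> KR" "0 \<le> S" "S \<le> B" "0 < h" "h \<le> 1"
  shows "(Mp * h^(p+1) * S + KR * h^(2*p+2))^2 \<le> (Mp * B + KR)^2 * h^(2*p+2)"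
proof -
  have "Mp * h^(p+1) * S \<le> Mp * B * h^(p+1)"
    using mult_left_mono[of S B "Mp * h^(p+1)"] assms by (simp add: mult_ac)
  moreover have "KR * h^(2*p+2) \<le> KR * h^(p+1)"
    using assms by (intro mult_left_mono power_decreasing) auto
  ultimately have "Mp * h^(p+1) * S + KR * h^(2*p+2) \<le> (Mp * B + KR) * h^(p+1)"
    unfolding distrib_right by linarith
  then have "(Mp * h^(p+1) * S + KR * h^(2*p+2))^2 \<le> ((Mp * B + KR) * h^(p+1))^2"
    using assms by (intro power_mono) auto
  also have "\<dots> = (Mp * B + KR)^2 * (h^(p+1))^2"
    by (rule power_mult_distrib)
  also have "(h^(p+1))^2 = h^((p+1)*2)"
    by (rule power_mult[symmetric])
  also have "(p+1)*2 = 2*p+2"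
    by simp
  finally show ?thesis .
qed

lemma semi_lagrangian_step_error:
  fixes w v v' u u' :: "real^'d \<Rightarrow> real" and p :: nat
  assumes \<Omega>: "open \<Omega>" "bounded \<Omega>" "\<Omega> \<noteq> {}"
    and F: "C1_diffeo_onto \<Omega> F" "0 < dX \<Omega> F"
    and w: "C2_everywhere w" "\<And>x. onorm (hess w x) \<le> H"
    and v: "square_integrable \<Omega> v" and v': "square_integrable \<Omega> v'" "\<And>x. x \<in> \<Omega> \<Longrightarrow> v' x = v (F x)"
    and G: "G \<in> borel_measurable (lebesgue_on \<Omega>)"
      "\<And>x. x \<in> \<Omega> \<Longrightarrow> norm (G x - F x - (Mp * h^(p+1)) *\<^sub>R D x) \<le> KR * h^(2*p+2)"
    and D: "\<And>x. x \<in> \<Omega> \<Longrightarrow> norm (D x) \<le> B"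
    and h: "0 < h" "h \<le> 1" and Mp: "0 \<le> Mp" and KR: "0 \<le> KR"
    and u: "continuous_on UNIV u" and u': "continuous_on UNIV u'"
  shows "L2norm \<Omega> (\<lambda>x. u x - v' x)
    \<le> (eps_int \<Omega> xs Nc (\<lambda>x. u x - u' x) + eps_opt xs Nc u u' + eps_approx \<Omega> u' (\<lambda>x. w (G x)))
      + (Mp / dX \<Omega> F * supnorm_on \<Omega> D * L2norm \<Omega> (grad w)) * h^(p+1)
      + (KR * L2norm \<Omega> (grad w) / dX \<Omega> F + H * (Mp * B + KR)^2 * sqrt (measure lebesgue \<Omega>)) * h^(2*p+2)
      + L2norm \<Omega> (\<lambda>x. w x - v x) / dX \<Omega> F"
proof -
  define S where "S = supnorm_on \<Omega> D"
  define \<delta> where "\<delta> = Mp * h^(p+1) * S + KR * h^(2*p+2)"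
  obtain x0 where "x0 \<in> \<Omega>"
    using \<Omega>(3) by blast
  have S: "0 \<le> S" "S \<le> B"
    using norm_le_supnorm_on[of \<Omega> D B x0, OF D \<open>x0 \<in> \<Omega>\<close>] supnorm_on_le[of \<Omega> D B, OF \<Omega>(3) D]
    unfolding S_def by (auto intro: order_trans[OF norm_ge_zero])
  have \<delta>: "0 \<le> \<delta>"
    using Mp KR S h by (simp add: \<delta>_def)
  have "norm (G x - F x) \<le> \<delta>" if "x \<in> \<Omega>" for x
  proof -
    have "norm (G x - F x) \<le> norm (G x - F x - (Mp * h^(p+1)) *\<^sub>R D x) + norm ((Mp * h^(p+1)) *\<^sub>R D x)"
      using norm_triangle_sub[of "G x - F x" "(Mp * h^(p+1)) *\<^sub>R D x"] by linarith
    also have "\<dots> \<le> KR * h^(2*p+2) + Mp * h^(p+1) * S"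
      using G(2)[OF that] norm_le_supnorm_on[of \<Omega> D B x, OF D that] Mp h
      by (intro add_mono) (auto simp: S_def intro: mult_left_mono)
    finally show ?thesis
      by (simp add: \<delta>_def)
  qed
  note step = L2norm_transport_step_le[OF \<Omega>(1,2) F w v v' G(1) this \<delta> u u']
  have "H * \<delta>^2 * sqrt (measure lebesgue \<Omega>)
      \<le> H * ((Mp * B + KR)^2 * h^(2*p+2)) * sqrt (measure lebesgue \<Omega>)"
    using expansion_remainder_sq_le[OF Mp KR S h, of p] hess_bound_nonneg[OF w]
    by (intro mult_right_mono mult_left_mono) (auto simp: \<delta>_def)
  moreover have "\<delta> * L2norm \<Omega> (grad w) / dX \<Omega> F
      = (Mp / dX \<Omega> F * S * L2norm \<Omega> (grad w)) * h^(p+1) + KR * L2norm \<Omega> (grad w) / dX \<Omega> F * h^(2*p+2)"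
    using F(2) by (simp add: \<delta>_def field_simps)
  ultimately show ?thesis
    using step L2norm_le_eps_int_eps_opt[of \<Omega> u u' xs Nc]
    by (simp add: S_def add_divide_distrib algebra_simps)
qed

section \<open>Accumulation of the one-step errors\<close>

lemma unrolled_recursion_le:
  fixes e a d :: "nat \<Rightarrow> real"
  assumes base: "e 0 \<le> a 0" and step: "\<And>n. e (Suc n) \<le> a (Suc n) + e n / d (Suc n)"
    and d: "\<And>n. 0 < d (Suc n)"
  shows "e n \<le> (\<Sum>k\<le>n. a k * (\<Prod>m\<in>{k<..n}. 1 / d m))"
proof (induction n)
  case 0
  then show ?case
    using base by simp
next
  case (Suc n)
  have "(\<Prod>m\<in>{k<..Suc n}. 1 / d m) = (\<Prod>m\<in>{k<..n}. 1 / d m) / d (Suc n)" if "k \<le> n" for k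
  proof -
    have "{k<..Suc n} = insert (Suc n) {k<..n}"
      using that by auto
    then show ?thesis
      by simp
  qed
  then have "(\<Sum>k\<le>Suc n. a k * (\<Prod>m\<in>{k<..Suc n}. 1 / d m))
      = a (Suc n) + (\<Sum>k\<le>n. a k * (\<Prod>m\<in>{k<..n}. 1 / d m)) / d (Suc n)"
    by (simp add: sum_divide_distrib)
  moreover have "e n / d (Suc n) \<le> (\<Sum>k\<le>n. a k * (\<Prod>m\<in>{k<..n}. 1 / d m)) / d (Suc n)"
    using Suc.IH d[of n] by (simp add: divide_right_mono)
  ultimately show ?case
    using step[of n] by simp
qed

text \<open>The constant \<open>K\<close> of the theorem; \<open>ds\<close> lists \<open>d\<^sub>X\<^sup>1, \<dots>, d\<^sub>X\<^sup>n\<close> (so \<open>d\<^sub>X\<^sup>m = ds ! (m - 1)\<close>)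
  and \<open>gs\<close> lists \<open>\<parallel>\<nabla>u\<^sub>\<theta>\<^sub>0\<parallel>, \<dots>, \<parallel>\<nabla>u\<^sub>\<theta>\<^sub>n\<parallel>\<close>.\<close>

definition K_const :: "nat \<Rightarrow> real \<Rightarrow> real \<Rightarrow> real \<Rightarrow> real \<Rightarrow> real \<Rightarrow> real list \<Rightarrow> real list \<Rightarrow> real" where
  "K_const n vol H Mp KR B ds gs =
     (\<Sum>k\<in>{1..n}. (KR * gs ! (k - 1) / ds ! (k - 1) + H * (Mp * B + KR)^2 * sqrt vol)
                  * (\<Prod>m\<in>{k<..n}. 1 / ds ! (m - 1)))"

lemma K_const_map_upt:
  "K_const n vol H Mp KR B (map d [1..<n+1]) (map g [0..<n+1]) =
     (\<Sum>k\<in>{1..n}. (KR * g (k - 1) / d k + H * (Mp * B + KR)^2 * sqrt vol) * (\<Prod>m\<in>{k<..n}. 1 / d m))"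
  unfolding K_const_def by (intro sum.cong prod.cong refl arg_cong2[where f = times]) (auto simp del: upt_Suc simp add: nth_map_upt)

lemma sum_split_first_term:
  fixes E C K P :: "nat \<Rightarrow> real"
  shows "(\<Sum>k\<le>n. (E k + (if k = 0 then 0 else C k * x + K k * y)) * P k)
    = (\<Sum>k\<le>n. E k * P k) + (\<Sum>k\<in>{1..n}. C k * P k) * x + (\<Sum>k\<in>{1..n}. K k * P k) * y"
proof -
  have "(\<Sum>k\<le>n. (if k = 0 then 0 else C k * x + K k * y) * P k) = (\<Sum>k\<in>{1..n}. (C k * x + K k * y) * P k)"
    by (induction n) simp_all
  also have "\<dots> = (\<Sum>k\<in>{1..n}. C k * P k) * x + (\<Sum>k\<in>{1..n}. K k * P k) * y"
    unfolding sum_distrib_right sum.distrib[symmetric] by (rule sum.cong) (simp_all add: algebra_simps)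
  finally show ?thesis
    by (simp add: distrib_right sum.distrib add.assoc)
qed

lemma semi_lagrangian_error_bound:
  fixes \<Omega> :: "(real^'d) set" and U u\<theta> u\<theta>s :: "nat \<Rightarrow> real^'d \<Rightarrow> real"
    and \<Phi> Xt D :: "nat \<Rightarrow> real^'d \<Rightarrow> real^'d" and p :: nat
  assumes \<Omega>: "open \<Omega>" "bounded \<Omega>" "\<Omega> \<noteq> {}"
    and U: "\<And>m. square_integrable \<Omega> (U m)" "\<And>m x. 1 \<le> m \<Longrightarrow> x \<in> \<Omega> \<Longrightarrow> U m x = U (m-1) (\<Phi> m x)"
    and \<Phi>: "\<And>m. 1 \<le> m \<Longrightarrow> C1_diffeo_onto \<Omega> (\<Phi> m)" "\<And>m. 1 \<le> m \<Longrightarrow> 0 < dX \<Omega> (\<Phi> m)"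
    and u\<theta>: "\<And>m. C2_everywhere (u\<theta> m)" "\<And>m x. onorm (hess (u\<theta> m) x) \<le> H"
    and u\<theta>s: "\<And>m. continuous_on UNIV (u\<theta>s m)"
    and Xt: "\<And>m. 1 \<le> m \<Longrightarrow> Xt m \<in> borel_measurable (lebesgue_on \<Omega>)"
      "\<And>m x. 1 \<le> m \<Longrightarrow> x \<in> \<Omega> \<Longrightarrow>
         norm (Xt m x - \<Phi> m x - (Mp * h^(p+1)) *\<^sub>R D m x) \<le> KR * h^(2*p+2)"
    and D: "\<And>m x. 1 \<le> m \<Longrightarrow> x \<in> \<Omega> \<Longrightarrow> norm (D m x) \<le> B"
    and h: "0 < h" "h \<le> 1" and Mp: "0 \<le> Mp" and KR: "0 \<le> KR"
  shows "L2norm \<Omega> (\<lambda>x. u\<theta> n x - U n x)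
    \<le> (\<Sum>nn\<le>n. (eps_int \<Omega> xs Nc (\<lambda>x. u\<theta> nn x - u\<theta>s nn x) + eps_opt xs Nc (u\<theta> nn) (u\<theta>s nn)
                  + (if nn = 0 then eps_approx \<Omega> (u\<theta>s 0) (U 0)
                     else eps_approx \<Omega> (u\<theta>s nn) (\<lambda>x. u\<theta> (nn-1) (Xt nn x))))
               * (\<Prod>m\<in>{nn<..n}. 1 / dX \<Omega> (\<Phi> m)))
      + (\<Sum>nn\<in>{1..n}. (Mp / dX \<Omega> (\<Phi> nn) * supnorm_on \<Omega> (D nn) * L2norm \<Omega> (grad (u\<theta> (nn-1))))
               * (\<Prod>m\<in>{nn<..n}. 1 / dX \<Omega> (\<Phi> m))) * h^(p+1)
      + K_const n (measure lebesgue \<Omega>) H Mp KR B (map (\<lambda>m. dX \<Omega> (\<Phi> m)) [1..<n+1])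
          (map (\<lambda>m. L2norm \<Omega> (grad (u\<theta> m))) [0..<n+1]) * h^(2*p+2)"
proof -
  define d where "d m = dX \<Omega> (\<Phi> m)" for m
  define e where "e m = L2norm \<Omega> (\<lambda>x. u\<theta> m x - U m x)" for m
  define E where "E nn = eps_int \<Omega> xs Nc (\<lambda>x. u\<theta> nn x - u\<theta>s nn x) + eps_opt xs Nc (u\<theta> nn) (u\<theta>s nn)
    + (if nn = 0 then eps_approx \<Omega> (u\<theta>s 0) (U 0) else eps_approx \<Omega> (u\<theta>s nn) (\<lambda>x. u\<theta> (nn-1) (Xt nn x)))"
    for nn
  define C where "C nn = Mp / d nn * supnorm_on \<Omega> (D nn) * L2norm \<Omega> (grad (u\<theta> (nn-1)))" for nn
  define K where "K nn = KR * L2norm \<Omega> (grad (u\<theta> (nn-1))) / d nn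
    + H * (Mp * B + KR)^2 * sqrt (measure lebesgue \<Omega>)" for nn
  define a where "a nn = E nn + (if nn = 0 then 0 else C nn * h^(p+1) + K nn * h^(2*p+2))" for nn
  have lmeas: "\<Omega> \<in> lmeasurable"
    using lmeasurable_open[OF \<Omega>(2,1)] .
  note sq_cont = square_integrable_continuous[OF lmeas \<Omega>(2)]
  note u\<theta>_cont = C2_everywhere_continuous[OF u\<theta>(1)]
  have base: "e 0 \<le> a 0"
    using L2norm_diff_triangle[OF sq_cont[OF u\<theta>_cont[of 0]] sq_cont[OF u\<theta>s[of 0]] U(1)[of 0]]
      L2norm_le_eps_int_eps_opt[of \<Omega> "u\<theta> 0" "u\<theta>s 0" xs Nc]
    by (simp add: a_def e_def E_def eps_approx_def)
  have step: "e (Suc m) \<le> a (Suc m) + e m / d (Suc m)" for m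
  proof -
    have m1: "1 \<le> Suc m"
      by simp
    have U_Suc: "U (Suc m) x = U m (\<Phi> (Suc m) x)" if "x \<in> \<Omega>" for x
      using U(2)[OF m1 that] by simp
    note one_step = semi_lagrangian_step_error[where xs = xs and Nc = Nc, OF \<Omega> \<Phi>[OF m1]
        u\<theta>(1)[of m] u\<theta>(2)[of m] U(1)[of m] U(1)[of "Suc m"] U_Suc Xt[OF m1] D[OF m1]
        h Mp KR u\<theta>_cont[of "Suc m"] u\<theta>s[of "Suc m"]]
    show ?thesis
      using one_step by (simp add: a_def e_def E_def C_def K_def d_def)
  qed
  have "e n \<le> (\<Sum>k\<le>n. a k * (\<Prod>m\<in>{k<..n}. 1 / d m))"
    using unrolled_recursion_le[OF base step] \<Phi>(2) by (simp add: d_def)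
  also have "\<dots> = (\<Sum>k\<le>n. E k * (\<Prod>m\<in>{k<..n}. 1 / d m))
      + (\<Sum>k\<in>{1..n}. C k * (\<Prod>m\<in>{k<..n}. 1 / d m)) * h^(p+1)
      + (\<Sum>k\<in>{1..n}. K k * (\<Prod>m\<in>{k<..n}. 1 / d m)) * h^(2*p+2)"
    unfolding a_def by (rule sum_split_first_term)
  finally show ?thesis
    unfolding K_const_map_upt by (simp only: e_def E_def C_def K_def d_def)
qed

theorem mainTheorem2:
  fixes p :: nat
  shows "\<exists>Kf :: nat \<Rightarrow> real \<Rightarrow> real \<Rightarrow> real \<Rightarrow> real \<Rightarrow> real \<Rightarrow> real list \<Rightarrow> real list \<Rightarrow> real.
   \<forall>(\<Omega> :: (real^'d) set) (V :: (real^'d \<Rightarrow> real) set) (xs :: nat \<Rightarrow> real^'d) (Nc :: nat)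
     (u :: real \<Rightarrow> real^'d \<Rightarrow> real) (X :: real \<Rightarrow> real \<Rightarrow> real^'d \<Rightarrow> real^'d)
     (a :: real \<Rightarrow> real^'d \<Rightarrow> real^'d) (t :: nat \<Rightarrow> real) (\<Delta>t :: real)
     (Xt :: nat \<Rightarrow> real^'d \<Rightarrow> real^'d) (ntau :: nat) (h :: real)
     (u\<theta> :: nat \<Rightarrow> real^'d \<Rightarrow> real) (u\<theta>s :: nat \<Rightarrow> real^'d \<Rightarrow> real)
     (Mp :: real) (KR :: real) (B :: real) (H :: real).
     ( open \<Omega> \<and> bounded \<Omega>
     \<and> (\<forall>v\<in>V. continuous_on UNIV v)
     \<and> Nc > 0 \<and> (\<forall>k<Nc. xs k \<in> \<Omega>)
     \<and> \<Delta>t > 0 \<and> t 0 = 0 \<and> (\<forall>m. t (Suc m) = t m + \<Delta>t)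
     \<and> (\<forall>m\<ge>1. \<forall>x\<in>\<Omega>. X (t m) (t m) x = x
            \<and> (\<forall>s\<in>{t (m-1)..t m}. ((\<lambda>s. X s (t m) x) has_vector_derivative a s (X s (t m) x)) (at s within {t (m-1)..t m})))
     \<and> (\<forall>m\<ge>1. \<forall>x\<in>\<Omega>. u (t m) x = u (t (m-1)) (X (t (m-1)) (t m) x))
     \<and> (\<forall>m. integrable (lebesgue_on \<Omega>) (\<lambda>x. (u (t m) x)^2) \<and> (\<lambda>x. u (t m) x) \<in> borel_measurable (lebesgue_on \<Omega>))
     \<and> (\<forall>m\<ge>1. C1_diffeo_onto \<Omega> (\<lambda>x. X (t (m-1)) (t m) x) \<and> dX \<Omega> (\<lambda>x. X (t (m-1)) (t m) x) > 0)
     \<and> is_colloc_min V xs Nc (u (t 0)) (u\<theta>s 0)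
     \<and> (\<forall>m\<ge>1. is_colloc_min V xs Nc (\<lambda>x. u\<theta> (m-1) (Xt m x)) (u\<theta>s m))
     \<and> (\<forall>m. u\<theta> m \<in> V \<and> C2_everywhere (u\<theta> m) \<and> (\<forall>x. onorm (hess (u\<theta> m) x) \<le> H))
     \<and> (\<forall>m\<ge>1. Xt m \<in> borel_measurable (lebesgue_on \<Omega>))
     \<and> ntau > 0 \<and> h = \<Delta>t / real ntau \<and> h \<le> 1
     \<and> Mp \<ge> 0 \<and> KR \<ge> 0
     \<and> (\<forall>m\<ge>1. \<forall>x\<in>\<Omega>.
           norm (Xt m x - X (t (m-1)) (t m) x
                 - (Mp * h^(p+1)) *\<^sub>R hderiv (p+1) (\<lambda>s. X s (t m) x) (t (m-1))) \<le> KR * h^(2*p+2))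
     \<and> (\<forall>m\<ge>1. \<forall>x\<in>\<Omega>. norm (hderiv (p+1) (\<lambda>s. X s (t m) x) (t (m-1))) \<le> B) )
     \<longrightarrow>
     (\<forall>n. L2norm \<Omega> (\<lambda>x. u\<theta> n x - u (t n) x)
        \<le> (\<Sum>nn\<le>n. (eps_int \<Omega> xs Nc (\<lambda>x. u\<theta> nn x - u\<theta>s nn x)
                      + eps_opt xs Nc (u\<theta> nn) (u\<theta>s nn)
                      + (if nn = 0 then eps_approx \<Omega> (u\<theta>s 0) (u (t 0))
                         else eps_approx \<Omega> (u\<theta>s nn) (\<lambda>x. u\<theta> (nn-1) (Xt nn x))))
                   * (\<Prod>m\<in>{nn<..n}. 1 / dX \<Omega> (\<lambda>x. X (t (m-1)) (t m) x)))
          + (\<Sum>nn\<in>{1..n}. (Mp / dX \<Omega> (\<lambda>x. X (t (nn-1)) (t nn) x)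
                 * supnorm_on \<Omega> (\<lambda>x. hderiv (p+1) (\<lambda>s. X s (t nn) x) (t (nn-1)))
                 * L2norm \<Omega> (grad (u\<theta> (nn-1))))
                 * (\<Prod>m\<in>{nn<..n}. 1 / dX \<Omega> (\<lambda>x. X (t (m-1)) (t m) x))) * h^(p+1)
          + Kf n (measure lebesgue \<Omega>) H Mp KR B
               (map (\<lambda>m. dX \<Omega> (\<lambda>x. X (t (m-1)) (t m) x)) [1..<n+1])
               (map (\<lambda>m. L2norm \<Omega> (grad (u\<theta> m))) [0..<n+1])
             * h^(2*p+2))"
proof (intro exI[of _ K_const] allI impI, elim conjE, goal_cases)
  case (1 \<Omega> V xs Nc u X a t \<Delta>t Xt ntau h u\<theta> u\<theta>s Mp KR B H n)
  have "u\<theta>s m \<in> V" for m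
    using 1 by (cases m) (auto simp: is_colloc_min_def)
  moreover have "\<Omega> \<noteq> {}" "0 < h"
    using 1 by auto
  ultimately show ?case
    using 1 by (intro semi_lagrangian_error_bound[where U = "\<lambda>m. u (t m)"
        and \<Phi> = "\<lambda>m x. X (t (m-1)) (t m) x" and D = "\<lambda>m x. hderiv (p+1) (\<lambda>s. X s (t m) x) (t (m-1))"])
      (auto simp: square_integrable_def)
qed

end
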